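(* Let $(\mathfrak{g},[\cdot,\cdot]_{\mathfrak{g}})$ be a Leibniz algebra, $(V;\rho^L,\rho^R)$ a representation, and $T:V\to\mathfrak{g}$ a relative Rota-Baxter operator. Define $\bar\rho^L,\bar\rho^R:V\to\mathfrak{gl}(\mathfrak{g})$ by $\bar\rho^L(u)x=[Tu,x]_{\mathfrak{g}}-T\rho^R(x)u$ and $\bar\rho^R(u)x=[x,Tu]_{\mathfrak{g}}-T\rho^L(x)u$ for $u\in V$, $x\in\mathfrak{g}$. Then $(\mathfrak{g};\bar\rho^L,\bar\rho^R)$ is a representation of the Leibniz algebra $(V,[\cdot,\cdot]_T)$, where $[u,v]_T=\rho^L(Tu)v+\rho^R(Tv)u$.
   Context: A Leibniz algebra is a vector space $\mathfrak{g}$ with bilinear $[\cdot,\cdot]_{\mathfrak{g}}$ satisfying $[x,[y,z]_{\mathfrak{g}}]_{\mathfrak{g}}=[[x,y]_{\mathfrak{g}},z]_{\mathfrak{g}}+[y,[x,z]_{\mathfrak{g}}]_{\mathfrak{g}}$. A representation $(W;\sigma^L,\sigma^R)$ of a Leibniz algebra $(\mathfrak{h},[\cdot,\cdot]_{\mathfrak{h}})$ is a vector space $W$ with linear maps $\sigma^L,\sigma^R:\mathfrak{h}\to\mathfrak{gl}(W)$ such that $\sigma^L([x,y]_{\mathfrak{h}})=[\sigma^L(x),\sigma^L(y)]$, $\sigma^R([x,y]_{\mathfrak{h}})=[\sigma^L(x),\sigma^R(y)]$, $\sigma^R(y)\sigma^L(x)=-\sigma^R(y)\sigma^R(x)$ for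 all $x,y\in\mathfrak{h}$ (commutators in $\mathfrak{gl}(W)$). A relative Rota-Baxter operator on $\mathfrak{g}$ with respect to a representation $(V;\rho^L,\rho^R)$ is a linear $T:V\to\mathfrak{g}$ with $[Tv_1,Tv_2]_{\mathfrak{g}}=T(\rho^L(Tv_1)v_2+\rho^R(Tv_2)v_1)$; then $(V,[\cdot,\cdot]_T)$ is a Leibniz algebra. *)

theory Defs
  imports Main "HOL.Vector_Spaces"
begin

definition bilinear_map ::
  "('k::field \<Rightarrow> 'a::ab_group_add \<Rightarrow> 'a) \<Rightarrow> ('k \<Rightarrow> 'b::ab_group_add \<Rightarrow> 'b) \<Rightarrow>
   ('k \<Rightarrow> 'c::ab_group_add \<Rightarrow> 'c) \<Rightarrow> ('a \<Rightarrow> 'b \<Rightarrow> 'c) \<Rightarrow> bool" where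
  "bilinear_map sa sb sc f \<longleftrightarrow>
     (\<forall>x. Vector_Spaces.linear sb sc (f x)) \<and> (\<forall>y. Vector_Spaces.linear sa sc (\<lambda>x. f x y))"

definition leibniz_algebra ::
  "('k::field \<Rightarrow> 'g::ab_group_add \<Rightarrow> 'g) \<Rightarrow> ('g \<Rightarrow> 'g \<Rightarrow> 'g) \<Rightarrow> bool" where
  "leibniz_algebra s br \<longleftrightarrow>
     vector_space s \<and> bilinear_map s s s br \<and>
     (\<forall>x y z. br x (br y z) = br (br x y) z + br y (br x z))"

definition commutator :: "('w \<Rightarrow> 'w::ab_group_add) \<Rightarrow> ('w \<Rightarrow> 'w) \<Rightarrow> ('w \<Rightarrow> 'w)" where
  "commutator A B = (\<lambda>w. A (B w) - B (A w))"

definition linear_to_gl ::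
  "('k::field \<Rightarrow> 'h::ab_group_add \<Rightarrow> 'h) \<Rightarrow> ('k \<Rightarrow> 'w::ab_group_add \<Rightarrow> 'w) \<Rightarrow>
   ('h \<Rightarrow> 'w \<Rightarrow> 'w) \<Rightarrow> bool" where
  "linear_to_gl sh sw \<sigma> \<longleftrightarrow>
     (\<forall>x. Vector_Spaces.linear sw sw (\<sigma> x)) \<and> (\<forall>w. Vector_Spaces.linear sh sw (\<lambda>x. \<sigma> x w))"

definition leibniz_rep ::
  "('k::field \<Rightarrow> 'h::ab_group_add \<Rightarrow> 'h) \<Rightarrow> ('h \<Rightarrow> 'h \<Rightarrow> 'h) \<Rightarrow>
   ('k \<Rightarrow> 'w::ab_group_add \<Rightarrow> 'w) \<Rightarrow> ('h \<Rightarrow> 'w \<Rightarrow> 'w) \<Rightarrow> ('h \<Rightarrow> 'w \<Rightarrow> 'w) \<Rightarrow> bool" where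
  "leibniz_rep sh br sw \<sigma>L \<sigma>R \<longleftrightarrow>
     vector_space sw \<and> linear_to_gl sh sw \<sigma>L \<and> linear_to_gl sh sw \<sigma>R \<and>
     (\<forall>x y. \<sigma>L (br x y) = commutator (\<sigma>L x) (\<sigma>L y)) \<and>
     (\<forall>x y. \<sigma>R (br x y) = commutator (\<sigma>L x) (\<sigma>R y)) \<and>
     (\<forall>x y. \<sigma>R y \<circ> \<sigma>L x = - (\<sigma>R y \<circ> \<sigma>R x))"

definition relative_RB ::
  "('k::field \<Rightarrow> 'v::ab_group_add \<Rightarrow> 'v) \<Rightarrow> ('k \<Rightarrow> 'g::ab_group_add \<Rightarrow> 'g) \<Rightarrow>
   ('g \<Rightarrow> 'g \<Rightarrow> 'g) \<Rightarrow> ('g \<Rightarrow> 'v \<Rightarrow> 'v) \<Rightarrow> ('g \<Rightarrow> 'v \<Rightarrow> 'v) \<Rightarrow> ('v \<Rightarrow> 'g) \<Rightarrow> bool" where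
  "relative_RB sv sg br \<rho>L \<rho>R T \<longleftrightarrow>
     Vector_Spaces.linear sv sg T \<and>
     (\<forall>v1 v2. br (T v1) (T v2) = T (\<rho>L (T v1) v2 + \<rho>R (T v2) v1))"

definition RB_bracket ::
  "('g \<Rightarrow> 'v \<Rightarrow> 'v::plus) \<Rightarrow> ('g \<Rightarrow> 'v \<Rightarrow> 'v) \<Rightarrow> ('v \<Rightarrow> 'g) \<Rightarrow> 'v \<Rightarrow> 'v \<Rightarrow> 'v" where
  "RB_bracket \<rho>L \<rho>R T u v = \<rho>L (T u) v + \<rho>R (T v) u"

definition bar_rhoL ::
  "('g \<Rightarrow> 'g \<Rightarrow> 'g::minus) \<Rightarrow> ('g \<Rightarrow> 'v \<Rightarrow> 'v) \<Rightarrow> ('v \<Rightarrow> 'g) \<Rightarrow> 'v \<Rightarrow> 'g \<Rightarrow> 'g" where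
  "bar_rhoL br \<rho>R T u x = br (T u) x - T (\<rho>R x u)"

definition bar_rhoR ::
  "('g \<Rightarrow> 'g \<Rightarrow> 'g::minus) \<Rightarrow> ('g \<Rightarrow> 'v \<Rightarrow> 'v) \<Rightarrow> ('v \<Rightarrow> 'g) \<Rightarrow> 'v \<Rightarrow> 'g \<Rightarrow> 'g" where
  "bar_rhoR br \<rho>L T u x = br x (T u) - T (\<rho>L x u)"

end

theory Submission
  imports Defs
begin

text \<open>The computation rests on the fact that \<open>T\<close> intertwines the new actions with the
  old ones: \<open>bar_rhoL u (T w) = T (\<rho>L (T u) w)\<close> and \<open>bar_rhoR u (T w) = T (\<rho>R (T u) w)\<close>,
  which is just the Rota-Baxter identity. Expanding each representation axiom for
  \<open>(bar_rhoL, bar_rhoR)\<close> at a point, the compositions through \<open>T\<close> collapse by these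
  identities, and what remains cancels by the Leibniz identity, the axioms of the
  representation \<open>(V; \<rho>L, \<rho>R)\<close>, and left anticommutativity \<open>[[x,y],z] = -[[y,x],z]\<close>,
  which holds in every Leibniz algebra because \<open>[[x,x],z] = 0\<close>.\<close>

lemma linear_simps:
  assumes "Vector_Spaces.linear s1 s2 f"
  shows "f (a + b) = f a + f b" "f (a - b) = f a - f b" "f (- a) = - f a"
    "f 0 = 0" "f (s1 c a) = s2 c (f a)"
  using assms[unfolded linear_iff_module_hom]
  by (simp_all add: module_hom.add module_hom.diff module_hom.neg module_hom.scale module_hom.zero)

lemma bilinear_mapD:
  assumes "bilinear_map sa sb sc f"
  shows "Vector_Spaces.linear sb sc (f x)" "Vector_Spaces.linear sa sc (\<lambda>x. f x y)"
  using assms unfolding bilinear_map_def by blast+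

lemma linear_to_glD:
  assumes "linear_to_gl sh sw \<sigma>"
  shows "Vector_Spaces.linear sw sw (\<sigma> x)" "Vector_Spaces.linear sh sw (\<lambda>x. \<sigma> x w)"
  using assms unfolding linear_to_gl_def by blast+

lemma leibniz_repD:
  assumes "leibniz_rep sh br sw \<sigma>L \<sigma>R"
  shows "\<sigma>L (br x y) w = \<sigma>L x (\<sigma>L y w) - \<sigma>L y (\<sigma>L x w)"
    and "\<sigma>R (br x y) w = \<sigma>L x (\<sigma>R y w) - \<sigma>R y (\<sigma>L x w)"
    and "\<sigma>R y (\<sigma>L x w) = - \<sigma>R y (\<sigma>R x w)"
proof -
  have "\<sigma>L (br x y) = commutator (\<sigma>L x) (\<sigma>L y)" "\<sigma>R (br x y) = commutator (\<sigma>L x) (\<sigma>R y)"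
    "\<sigma>R y \<circ> \<sigma>L x = - (\<sigma>R y \<circ> \<sigma>R x)"
    using assms unfolding leibniz_rep_def by blast+
  then show "\<sigma>L (br x y) w = \<sigma>L x (\<sigma>L y w) - \<sigma>L y (\<sigma>L x w)"
    and "\<sigma>R (br x y) w = \<sigma>L x (\<sigma>R y w) - \<sigma>R y (\<sigma>L x w)"
    and "\<sigma>R y (\<sigma>L x w) = - \<sigma>R y (\<sigma>R x w)"
    unfolding commutator_def by (auto dest: fun_cong[where x = w])
qed

lemma leibniz_algebra_anticomm_left:
  assumes "leibniz_algebra s br"
  shows "br (br y x) z = - br (br x y) z"
proof -
  have leibniz: "br a (br b c) = br (br a b) c + br b (br a c)" for a b c
    using assms unfolding leibniz_algebra_def by blast
  have square: "br (br a a) c = 0" for a c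
    using leibniz[of a a c] by simp
  have bil: "bilinear_map s s s br"
    using assms unfolding leibniz_algebra_def by blast
  note lin1 = linear_simps[OF bilinear_mapD(1)[OF bil]]
  note lin2 = linear_simps[OF bilinear_mapD(2)[OF bil], simplified]
  from square[of "x + y" z] show ?thesis
    by (simp add: lin1 lin2 square algebra_simps eq_neg_iff_add_eq_0)
qed

lemma linear_to_gl_bar_rhoL:
  assumes "bilinear_map sg sg sg br" "linear_to_gl sg sv \<rho>R" "Vector_Spaces.linear sv sg T"
  shows "linear_to_gl sv sg (bar_rhoL br \<rho>R T)"
proof -
  interpret g: vector_space sg
    using assms(3) unfolding linear_iff by blast
  show ?thesis
    using assms(3)
    unfolding linear_to_gl_def bar_rhoL_def linear_iff
    by (simp add: linear_simps[OF assms(3)] linear_simps[OF bilinear_mapD(1)[OF assms(1)]]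
        linear_simps[OF bilinear_mapD(2)[OF assms(1)], simplified]
        linear_simps[OF linear_to_glD(1)[OF assms(2)]]
        linear_simps[OF linear_to_glD(2)[OF assms(2)], simplified] g.scale_right_diff_distrib)
qed

lemma linear_to_gl_bar_rhoR:
  assumes "bilinear_map sg sg sg br" "linear_to_gl sg sv \<rho>L" "Vector_Spaces.linear sv sg T"
  shows "linear_to_gl sv sg (bar_rhoR br \<rho>L T)"
proof -
  interpret g: vector_space sg
    using assms(3) unfolding linear_iff by blast
  show ?thesis
    using assms(3)
    unfolding linear_to_gl_def bar_rhoR_def linear_iff
    by (simp add: linear_simps[OF assms(3)] linear_simps[OF bilinear_mapD(1)[OF assms(1)]]
        linear_simps[OF bilinear_mapD(2)[OF assms(1)], simplified]
        linear_simps[OF linear_to_glD(1)[OF assms(2)]]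
        linear_simps[OF linear_to_glD(2)[OF assms(2)], simplified] g.scale_right_diff_distrib)
qed

locale relative_RB_operator =
  fixes sg :: "'k::field \<Rightarrow> 'g::ab_group_add \<Rightarrow> 'g"
    and sv :: "'k \<Rightarrow> 'v::ab_group_add \<Rightarrow> 'v"
    and br :: "'g \<Rightarrow> 'g \<Rightarrow> 'g"
    and \<rho>L \<rho>R :: "'g \<Rightarrow> 'v \<Rightarrow> 'v"
    and T :: "'v \<Rightarrow> 'g"
  assumes leibniz_algebra: "leibniz_algebra sg br"
    and rep: "leibniz_rep sg br sv \<rho>L \<rho>R"
    and RB: "relative_RB sv sg br \<rho>L \<rho>R T"
begin

abbreviation "brT \<equiv> RB_bracket \<rho>L \<rho>R T"
abbreviation "\<rho>barL \<equiv> bar_rhoL br \<rho>R T"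
abbreviation "\<rho>barR \<equiv> bar_rhoR br \<rho>L T"

lemma bilinear: "bilinear_map sg sg sg br"
  and leibniz: "br x (br y z) = br (br x y) z + br y (br x z)"
  using leibniz_algebra unfolding leibniz_algebra_def by blast+

lemma T_linear: "Vector_Spaces.linear sv sg T"
  and T_bracket: "br (T u) (T v) = T (brT u v)"
  using RB unfolding relative_RB_def RB_bracket_def by blast+

lemma linear_to_gl_rho: "linear_to_gl sg sv \<rho>L" "linear_to_gl sg sv \<rho>R"
  using rep unfolding leibniz_rep_def by blast+

lemmas linear_simps_T = linear_simps[OF T_linear]
  and linear_simps_rho = linear_simps[OF linear_to_glD(1)[OF linear_to_gl_rho(1)]]
    linear_simps[OF linear_to_glD(2)[OF linear_to_gl_rho(1)], simplified]
    linear_simps[OF linear_to_glD(1)[OF linear_to_gl_rho(2)]]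
    linear_simps[OF linear_to_glD(2)[OF linear_to_gl_rho(2)], simplified]

lemma bar_rhoL_T: "\<rho>barL u (T w) = T (\<rho>L (T u) w)"
  by (simp add: bar_rhoL_def T_bracket RB_bracket_def linear_simps_T)

lemma bar_rhoR_T: "\<rho>barR u (T w) = T (\<rho>R (T u) w)"
  by (simp add: bar_rhoR_def T_bracket RB_bracket_def linear_simps_T)

lemma linear_to_gl_bar_rho: "linear_to_gl sv sg \<rho>barL" "linear_to_gl sv sg \<rho>barR"
  using linear_to_gl_bar_rhoL[OF bilinear linear_to_gl_rho(2) T_linear]
    linear_to_gl_bar_rhoR[OF bilinear linear_to_gl_rho(1) T_linear] .

lemmas linear_simps_bar_rho = linear_simps[OF linear_to_glD(1)[OF linear_to_gl_bar_rho(1)]]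
  linear_simps[OF linear_to_glD(1)[OF linear_to_gl_bar_rho(2)]]

lemmas rep_rules = leibniz_repD[OF rep]

lemma bar_rhoL_minus_T: "\<rho>barL u (y - T w) = \<rho>barL u y - T (\<rho>L (T u) w)"
  by (simp add: linear_simps_bar_rho bar_rhoL_T)

lemma bar_rhoR_minus_T: "\<rho>barR u (y - T w) = \<rho>barR u y - T (\<rho>R (T u) w)"
  by (simp add: linear_simps_bar_rho bar_rhoR_T)

lemma bar_rhoL_bracket: "\<rho>barL (brT u v) x = \<rho>barL u (\<rho>barL v x) - \<rho>barL v (\<rho>barL u x)"
proof -
  have expand: "\<rho>barL u (\<rho>barL v x) =
      br (T u) (br (T v) x) - T (\<rho>R (br (T v) x) u) - T (\<rho>L (T u) (\<rho>R x v))" for u v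
    unfolding bar_rhoL_def[of br \<rho>R T v] bar_rhoL_minus_T by (simp add: bar_rhoL_def)
  show ?thesis
    unfolding expand using leibniz[of "T u" "T v" x]
    by (simp add: bar_rhoL_def T_bracket RB_bracket_def rep_rules linear_simps_T linear_simps_rho
        algebra_simps)
qed

lemma bar_rhoR_bracket: "\<rho>barR (brT u v) x = \<rho>barL u (\<rho>barR v x) - \<rho>barR v (\<rho>barL u x)"
proof -
  have expand_LR: "\<rho>barL u (\<rho>barR v x) =
      br (T u) (br x (T v)) - T (\<rho>R (br x (T v)) u) - T (\<rho>L (T u) (\<rho>L x v))"
    unfolding bar_rhoR_def[of br \<rho>L T v] bar_rhoL_minus_T by (simp add: bar_rhoL_def)
  have expand_RL: "\<rho>barR v (\<rho>barL u x) =
      br (br (T u) x) (T v) - T (\<rho>L (br (T u) x) v) - T (\<rho>R (T v) (\<rho>R x u))"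
    unfolding bar_rhoL_def[of br \<rho>R T u] bar_rhoR_minus_T by (simp add: bar_rhoR_def)
  show ?thesis
    unfolding expand_LR expand_RL using leibniz[of "T u" x "T v"]
    by (simp add: bar_rhoR_def T_bracket RB_bracket_def rep_rules linear_simps_T linear_simps_rho
        algebra_simps)
qed

lemma bar_rhoR_bar_rhoL: "\<rho>barR v (\<rho>barL u x) = - \<rho>barR v (\<rho>barR u x)"
proof -
  have expand_RL: "\<rho>barR v (\<rho>barL u x) =
      br (br (T u) x) (T v) - T (\<rho>L (br (T u) x) v) - T (\<rho>R (T v) (\<rho>R x u))"
    unfolding bar_rhoL_def[of br \<rho>R T u] bar_rhoR_minus_T by (simp add: bar_rhoR_def)
  have expand_RR: "\<rho>barR v (\<rho>barR u x) =
      br (br x (T u)) (T v) - T (\<rho>L (br x (T u)) v) - T (\<rho>R (T v) (\<rho>L x u))"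
    unfolding bar_rhoR_def[of br \<rho>L T u] bar_rhoR_minus_T by (simp add: bar_rhoR_def)
  show ?thesis
    unfolding expand_RL expand_RR
    by (simp add: leibniz_algebra_anticomm_left[OF leibniz_algebra, of x "T u"] rep_rules
        linear_simps_T algebra_simps)
qed

end

theorem theorem2p7:
  fixes sg :: "'k::field \<Rightarrow> 'g::ab_group_add \<Rightarrow> 'g"
    and sv :: "'k \<Rightarrow> 'v::ab_group_add \<Rightarrow> 'v"
    and br :: "'g \<Rightarrow> 'g \<Rightarrow> 'g"
    and \<rho>L \<rho>R :: "'g \<Rightarrow> 'v \<Rightarrow> 'v"
    and T :: "'v \<Rightarrow> 'g"
  assumes "leibniz_algebra sg br"
    and "leibniz_rep sg br sv \<rho>L \<rho>R"
    and "relative_RB sv sg br \<rho>L \<rho>R T"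
  shows "leibniz_rep sv (RB_bracket \<rho>L \<rho>R T) sg (bar_rhoL br \<rho>R T) (bar_rhoR br \<rho>L T)"
proof -
  interpret relative_RB_operator sg sv br \<rho>L \<rho>R T
    using assms by unfold_locales
  have "vector_space sg"
    using T_linear unfolding linear_iff by blast
  then show ?thesis
    unfolding leibniz_rep_def commutator_def
    by (intro conjI linear_to_gl_bar_rho allI ext)
      (simp_all add: bar_rhoL_bracket bar_rhoR_bracket bar_rhoR_bar_rhoL)
qed

end
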